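(* Let $W,V$ be subspaces of $\mathbb{R}^n$ with $\mathbb{R}^n=W\oplus V^\perp$. Let $\mu\in\mathcal{P}_2(W)$ and $\nu\in\mathcal{P}_2(V)$ be Bessel probability measures with bounds $B_\mu>0$ and $B_\nu>0$ respectively, and let $\gamma\in\Gamma(\mu,\nu)$. Then the following are equivalent: (1) for all $\mathbf{f}\in W$, $\mathbf{f}=\int_{W\times V}\mathbf{x}\langle\mathbf{y},\mathbf{f}\rangle\,d\gamma(\mathbf{x},\mathbf{y})$; (2) for all $\mathbf{f}\in\mathbb{R}^n$, $\boldsymbol{\pi}_{WV^\perp}\mathbf{f}=\int_{W\times V}\mathbf{x}\langle\mathbf{y},\mathbf{f}\rangle\,d\gamma(\mathbf{x},\mathbf{y})$; (3) for all $\mathbf{f}\in\mathbb{R}^n$, $\boldsymbol{\pi}_{VW^\perp}\mathbf{f}=\int_{W\times V}\langle\mathbf{x},\mathbf{f}\rangle\mathbf{y}\,d\gamma(\mathbf{x},\mathbf{y})$; (4) for all $\mathbf{f},\mathbf{g}\in\mathbb{R}^n$, $\langle\boldsymbol{\pi}_{WV^\perp}\mathbf{f},\mathbf{g}\rangle=\int_{W\times V}\langle\mathbf{x},\mathbf{g}\rangle\langle\mathbf{y},\mathbf{f}\rangle\,d\gamma(\mathbf{x},\mathbf{y})$; (5) for all $\mathbf{f},\mathbf{g}\in\mathbb{R}^n$, $\langle\boldsymbol{\pi}_{VW^\perp}\mathbf{f},\mathbf{g}\rangle=\int_{W\times V}\langle\mathbf{x},\mathbf{f}\rangle\langle\mathbf{y},\mathbf{g}\rangle\,d\gamma(\mathbf{x},\mathbf{y})$.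 If any of these conditions holds, then $\mu$ and $\nu$ are probabilistic frames for $W$ and $V$ with lower bounds $\frac1{B_\nu}$ and $\frac1{B_\mu}$, respectively. Furthermore, in that case $\mu$ and $(\mathbf{P}_W)_\#\nu$ are dual probabilistic frames for $W$, and $(\mathbf{P}_V)_\#\mu$ and $\nu$ are dual probabilistic frames for $V$.
   Context: $\mathcal{P}_2(W)$ is the set of Borel probability measures on $W$ (viewed as measures on $\mathbb{R}^n$ concentrated on $W$) with finite second moment $M_2(\mu)=\int\|\mathbf{x}\|^2d\mu(\mathbf{x})$. $\Gamma(\mu,\nu)$ is the set of couplings: Borel probability measures on $W\times V$ with first marginal $\mu$ and second marginal $\nu$. $\mu\in\mathcal{P}_2(W)$ is a Bessel probability measure for $W$ with bound $B$ if $\int_W|\langle\mathbf{x},\mathbf{y}\rangle|^2d\mu(\mathbf{y})\le B\|\mathbf{x}\|^2$ for all $\mathbf{x}\in W$; it is a probabilistic frame for $W$ with bounds $0<A\le B$ if moreover $A\|\mathbf{x}\|^2\le\int_W|\langle\mathbf{x},\mathbf{y}\rangle|^2d\mu(\mathbf{y})$ for all $\mathbf{x}\in W$. $\mathbf{P}_W$ is the orthogonal projection onto $W$; $\boldsymbol{\pi}_{WV^\perp}$ is the oblique projection onto $W$ along $V^\perp$, and $\boldsymbol{\pi}_{VW^\perp}$ the oblique projection onto $V$ along $W^\perp$ (note $\mathbb{R}^n=V\oplus W^\perp$ too). For a pushforward, $f_\#\mu(E)=\mu(f^{-1}(E))$. Two probability measures $\mu,\eta$ on $W$ are dual probabilistic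 frames for $W$ if $\mu$ is a probabilistic frame for $W$ and there is a coupling $\gamma\in\Gamma(\mu,\eta)$ with $\int\mathbf{x}\mathbf{y}^td\gamma(\mathbf{x},\mathbf{y})=\mathbf{P}_W$. *)

theory Defs
  imports "HOL-Probability.Probability"
begin

text \<open>Ambient space R^n is modelled as real^'n. Measures are Borel measures on the
whole space, concentrated on the relevant subspace.\<close>

text \<open>Oblique projection onto W along U (meaningful when R^n = W (+) U).\<close>
definition oblique_proj :: "(real^'n) set \<Rightarrow> (real^'n) set \<Rightarrow> real^'n \<Rightarrow> real^'n" where
  "oblique_proj W U f = (THE w. w \<in> W \<and> f - w \<in> U)"

definition orth_proj :: "(real^'n) set \<Rightarrow> real^'n \<Rightarrow> real^'n" where
  "orth_proj W = oblique_proj W (orthogonal_comp W)"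

definition direct_sum_univ :: "(real^'n) set \<Rightarrow> (real^'n) set \<Rightarrow> bool" where
  "direct_sum_univ W U \<longleftrightarrow> subspace W \<and> subspace U \<and> W \<inter> U = {0} \<and>
     (\<forall>f. \<exists>w\<in>W. \<exists>u\<in>U. f = w + u)"

definition prob_on :: "(real^'n) set \<Rightarrow> (real^'n) measure \<Rightarrow> bool" where
  "prob_on W \<mu> \<longleftrightarrow> prob_space \<mu> \<and> sets \<mu> = sets borel \<and> W \<in> sets \<mu> \<and> emeasure \<mu> W = 1"

definition P2 :: "(real^'n) set \<Rightarrow> (real^'n) measure \<Rightarrow> bool" where
  "P2 W \<mu> \<longleftrightarrow> prob_on W \<mu> \<and> integrable \<mu> (\<lambda>x. (norm x)\<^sup>2)"

definition bessel :: "(real^'n) set \<Rightarrow> (real^'n) measure \<Rightarrow> real \<Rightarrow> bool" where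
  "bessel W \<mu> B \<longleftrightarrow> P2 W \<mu> \<and>
     (\<forall>x\<in>W. (\<integral>y. \<bar>x \<bullet> y\<bar>\<^sup>2 \<partial>\<mu>) \<le> B * (norm x)\<^sup>2)"

definition prob_frame :: "(real^'n) set \<Rightarrow> (real^'n) measure \<Rightarrow> real \<Rightarrow> real \<Rightarrow> bool" where
  "prob_frame W \<mu> A B \<longleftrightarrow> 0 < A \<and> A \<le> B \<and> bessel W \<mu> B \<and>
     (\<forall>x\<in>W. A * (norm x)\<^sup>2 \<le> (\<integral>y. \<bar>x \<bullet> y\<bar>\<^sup>2 \<partial>\<mu>))"

text \<open>Couplings: probability measures on R^n x R^n with the given marginals
  (concentration on W x V follows from the marginals).\<close>
definition coupling :: "((real^'n) \<times> (real^'n)) measure \<Rightarrow> (real^'n) measure \<Rightarrow> (real^'n) measure \<Rightarrow> bool" where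
  "coupling \<gamma> \<mu> \<nu> \<longleftrightarrow> prob_space \<gamma> \<and> sets \<gamma> = sets (borel \<Otimes>\<^sub>M borel) \<and>
     distr \<gamma> borel fst = \<mu> \<and> distr \<gamma> borel snd = \<nu>"

definition outer :: "real^'n \<Rightarrow> real^'n \<Rightarrow> real^'n^'n" where
  "outer x y = (\<chi> i j. x $ i * y $ j)"

definition dual_prob_frames :: "(real^'n) set \<Rightarrow> (real^'n) measure \<Rightarrow> (real^'n) measure \<Rightarrow> bool" where
  "dual_prob_frames W \<mu> \<eta> \<longleftrightarrow> (\<exists>A B. prob_frame W \<mu> A B) \<and> prob_on W \<eta> \<and>
     (\<exists>\<gamma>. coupling \<gamma> \<mu> \<eta> \<and>
        (\<integral>p. outer (fst p) (snd p) \<partial>\<gamma>) = matrix (orth_proj W))"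

end

theory Submission
  imports Defs
begin

text \<open>
Write X, Y for the coordinates of the coupling and C = E[X Y^T] for its cross-covariance matrix,
so that C f = E[(Y . f) X]. All five conditions say C = [pi_{W V^perp}]: (2) and (4) test this
identity against f, resp. against f and g; (3) and (5) are its transpose, since pi_{V W^perp} is
the adjoint of pi_{W V^perp}; and (1) already implies it, because Y lies in V almost surely, so
C annihilates V^perp, which contains pi_{W V^perp} f - f.

Once C = [pi_{W V^perp}], every x in W or in V satisfies |x|^2 = <C x, x> = E[<X, x> <Y, x>].
Integrating 2ab <= B a^2 + b^2 / B, with B the Bessel bound of the other marginal, gives the
lower frame bounds. Pushing gamma forward along (id, P_W), resp. (P_V, id), yields couplings with
cross-covariance C P_W = [pi_{W V^perp} P_W] = [P_W], resp. P_V C = [P_V pi_{W V^perp}] = [P_V].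
\<close>

section \<open>Oblique and orthogonal projections\<close>

lemma oblique_proj_eqI:
  assumes "subspace W" "subspace U" "W \<inter> U = {0}" "w \<in> W" "f - w \<in> U"
  shows "oblique_proj W U f = w"
  unfolding oblique_proj_def
proof (rule the_equality)
  show "w \<in> W \<and> f - w \<in> U" using assms by auto
  fix w' assume "w' \<in> W \<and> f - w' \<in> U"
  then have "w - w' \<in> W" "w - w' \<in> U"
    using assms subspace_diff[of W w w'] subspace_diff[of U "f - w'" "f - w"] by auto
  with assms(3) have "w - w' = 0" by blast
  then show "w' = w" by simp
qed

lemma
  assumes "direct_sum_univ W U"
  shows oblique_proj_in: "oblique_proj W U f \<in> W"
    and oblique_proj_diff_in: "f - oblique_proj W U f \<in> U"
proof -
  have W: "subspace W" and U: "subspace U" and WU: "W \<inter> U = {0}"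
    using assms by (simp_all add: direct_sum_univ_def)
  from assms obtain w u where "w \<in> W" "u \<in> U" "f = w + u"
    unfolding direct_sum_univ_def by blast
  moreover have "oblique_proj W U f = w"
    using \<open>w \<in> W\<close> \<open>u \<in> U\<close> \<open>f = w + u\<close> by (intro oblique_proj_eqI[OF W U WU]) auto
  ultimately show "oblique_proj W U f \<in> W" "f - oblique_proj W U f \<in> U" by auto
qed

lemma
  assumes "direct_sum_univ W U"
  shows oblique_proj_fixes: "w \<in> W \<Longrightarrow> oblique_proj W U w = w"
    and oblique_proj_annihilates: "u \<in> U \<Longrightarrow> oblique_proj W U u = 0"
proof -
  have W: "subspace W" and U: "subspace U" and WU: "W \<inter> U = {0}"
    using assms by (simp_all add: direct_sum_univ_def)
  show "w \<in> W \<Longrightarrow> oblique_proj W U w = w"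
    by (rule oblique_proj_eqI[OF W U WU]) (simp_all add: subspace_0[OF U])
  show "u \<in> U \<Longrightarrow> oblique_proj W U u = 0"
    by (rule oblique_proj_eqI[OF W U WU]) (simp_all add: subspace_0[OF W])
qed

lemma linear_oblique_proj:
  assumes "direct_sum_univ W U"
  shows "linear (oblique_proj W U)"
proof -
  have W: "subspace W" and U: "subspace U" and WU: "W \<inter> U = {0}"
    using assms by (simp_all add: direct_sum_univ_def)
  note in_W = oblique_proj_in[OF assms] and in_U = oblique_proj_diff_in[OF assms]
  show ?thesis
  proof (rule linearI)
    fix x y
    have "(x - oblique_proj W U x) + (y - oblique_proj W U y) \<in> U"
      by (rule subspace_add[OF U in_U in_U])
    then show "oblique_proj W U (x + y) = oblique_proj W U x + oblique_proj W U y"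
      by (intro oblique_proj_eqI[OF W U WU] subspace_add[OF W in_W in_W]) (simp add: algebra_simps)
  next
    fix c x
    have "c *\<^sub>R (x - oblique_proj W U x) \<in> U" by (rule subspace_scale[OF U in_U])
    then show "oblique_proj W U (c *\<^sub>R x) = c *\<^sub>R oblique_proj W U x"
      by (intro oblique_proj_eqI[OF W U WU] subspace_scale[OF W in_W]) (simp add: algebra_simps)
  qed
qed

lemma inner_oblique_proj:
  assumes "direct_sum_univ W (orthogonal_comp V)" "y \<in> V"
  shows "y \<bullet> oblique_proj W (orthogonal_comp V) f = y \<bullet> f"
proof -
  have "y \<bullet> (f - oblique_proj W (orthogonal_comp V) f) = 0"
    using oblique_proj_diff_in[OF assms(1), of f] assms(2)
    by (simp add: orthogonal_comp_def orthogonal_def)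
  then show ?thesis by (simp add: inner_diff_right)
qed

lemma adjoint_oblique_proj:
  fixes W V :: "(real^'n) set"
  assumes V: "subspace V" and ds: "direct_sum_univ W (orthogonal_comp V)"
  shows "adjoint (oblique_proj W (orthogonal_comp V)) = oblique_proj V (orthogonal_comp W)"
proof
  fix f
  let ?P = "oblique_proj W (orthogonal_comp V)"
  have lin: "linear ?P" by (rule linear_oblique_proj[OF ds])
  have VW: "V \<inter> orthogonal_comp W = {0}"
  proof (intro subset_antisym subsetI)
    fix v assume v: "v \<in> V \<inter> orthogonal_comp W"
    obtain w u where "w \<in> W" "u \<in> orthogonal_comp V" "v = w + u"
      using ds unfolding direct_sum_univ_def by blast
    moreover have "v \<bullet> w = 0" "v \<bullet> u = 0"
      using v \<open>w \<in> W\<close> \<open>u \<in> orthogonal_comp V\<close>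
      by (auto simp: orthogonal_comp_def orthogonal_def inner_commute)
    ultimately have "v \<bullet> v = 0" by (simp add: inner_add_right)
    then show "v \<in> {0}" by simp
  qed (simp add: subspace_0[OF V] subspace_0[OF subspace_orthogonal_comp])
  have "u \<bullet> adjoint ?P f = 0" if "u \<in> orthogonal_comp V" for u
    using that by (simp add: adjoint_works[OF lin] oblique_proj_annihilates[OF ds])
  then have "adjoint ?P f \<in> orthogonal_comp (orthogonal_comp V)"
    by (simp add: orthogonal_comp_def orthogonal_def)
  then have "adjoint ?P f \<in> V" by (simp add: orthogonal_comp_self[OF V])
  moreover have "w \<bullet> (f - adjoint ?P f) = 0" if "w \<in> W" for w
    using that by (simp add: adjoint_works[OF lin] inner_diff_right oblique_proj_fixes[OF ds])
  then have "f - adjoint ?P f \<in> orthogonal_comp W"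
    by (simp add: orthogonal_comp_def orthogonal_def)
  ultimately show "adjoint ?P f = oblique_proj V (orthogonal_comp W) f"
    by (intro oblique_proj_eqI[OF V subspace_orthogonal_comp VW, symmetric])
qed

lemma direct_sum_univ_orthogonal_comp:
  fixes W :: "(real^'n) set"
  assumes "subspace W"
  shows "direct_sum_univ W (orthogonal_comp W)"
proof -
  have "\<forall>f. \<exists>w\<in>W. \<exists>u\<in>orthogonal_comp W. f = w + u"
    using subspace_sum_orthogonal_comp[OF assms] by (metis UNIV_I set_plus_elim)
  then show ?thesis
    using assms subspace_orthogonal_comp orthogonal_Int_0[OF assms]
    unfolding direct_sum_univ_def by blast
qed

lemma orth_proj_in:
  fixes U :: "(real^'n) set"
  assumes "subspace U"
  shows "orth_proj U f \<in> U"
  unfolding orth_proj_def using direct_sum_univ_orthogonal_comp[OF assms] by (rule oblique_proj_in)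

lemma linear_orth_proj:
  fixes U :: "(real^'n) set"
  assumes "subspace U"
  shows "linear (orth_proj U)"
  unfolding orth_proj_def using direct_sum_univ_orthogonal_comp[OF assms] by (rule linear_oblique_proj)

lemma inner_orth_proj:
  fixes U :: "(real^'n) set"
  assumes "subspace U"
  shows "y \<in> U \<Longrightarrow> y \<bullet> orth_proj U f = y \<bullet> f"
  unfolding orth_proj_def using direct_sum_univ_orthogonal_comp[OF assms] by (rule inner_oblique_proj)

lemma adjoint_orth_proj:
  fixes U :: "(real^'n) set"
  assumes "subspace U"
  shows "adjoint (orth_proj U) = orth_proj U"
  unfolding orth_proj_def using direct_sum_univ_orthogonal_comp[OF assms]
  by (rule adjoint_oblique_proj[OF assms])

lemma norm_orth_proj_le:
  fixes U :: "(real^'n) set"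
  assumes "subspace U"
  shows "norm (orth_proj U f) \<le> norm f"
proof -
  have "(norm (orth_proj U f))\<^sup>2 = orth_proj U f \<bullet> f"
    by (simp add: power2_norm_eq_inner inner_orth_proj[OF assms orth_proj_in[OF assms]])
  also have "\<dots> \<le> norm (orth_proj U f) * norm f" by (rule norm_cauchy_schwarz)
  finally show ?thesis
    by (cases "orth_proj U f = 0") (auto simp: power2_eq_square mult_le_cancel_left)
qed

lemma transpose_matrix_orth_proj:
  fixes U :: "(real^'n) set"
  assumes "subspace U"
  shows "transpose (matrix (orth_proj U)) = matrix (orth_proj U)"
  using matrix_adjoint[OF linear_orth_proj[OF assms]] by (simp add: adjoint_orth_proj[OF assms])

lemma borel_measurable_linear:
  fixes f :: "'a::euclidean_space \<Rightarrow> 'b::euclidean_space"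
  shows "linear f \<Longrightarrow> f \<in> borel_measurable borel"
  by (intro borel_measurable_continuous_onI linear_continuous_on)
     (simp add: linear_conv_bounded_linear[symmetric])

lemma orth_proj_oblique_proj:
  fixes W V :: "(real^'n) set"
  assumes V: "subspace V" and ds: "direct_sum_univ W (orthogonal_comp V)"
  shows "orth_proj V (oblique_proj W (orthogonal_comp V) f) = orth_proj V f"
proof -
  let ?P = "oblique_proj W (orthogonal_comp V)"
  have "orth_proj V (f - ?P f) = 0"
    unfolding orth_proj_def using direct_sum_univ_orthogonal_comp[OF V] oblique_proj_diff_in[OF ds]
    by (rule oblique_proj_annihilates)
  then show ?thesis by (simp add: linear_diff[OF linear_orth_proj[OF V]])
qed

section \<open>Measures with finite second moment\<close>

lemma P2_sets: "P2 U m \<Longrightarrow> sets m = sets borel"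
  by (simp add: P2_def prob_on_def)

lemma P2_prob_space: "P2 U m \<Longrightarrow> prob_space m"
  by (simp add: P2_def prob_on_def)

lemma P2_AE_mem:
  assumes "P2 U m"
  shows "AE y in m. y \<in> U"
proof -
  interpret prob_space m by (rule P2_prob_space[OF assms])
  have "U \<in> events" "emeasure m U = 1" using assms by (auto simp: P2_def prob_on_def)
  then show ?thesis by (intro AE_prob_1) (simp add: emeasure_eq_measure)
qed

lemma bessel_bound_all:
  fixes m :: "(real^'n) measure"
  assumes bessel: "bessel U m B" and U: "subspace U" and "0 \<le> B"
  shows "(\<integral>y. \<bar>x \<bullet> y\<bar>\<^sup>2 \<partial>m) \<le> B * (norm x)\<^sup>2"
proof -
  have P2: "P2 U m" using bessel by (simp add: bessel_def)
  have "(\<integral>y. \<bar>x \<bullet> y\<bar>\<^sup>2 \<partial>m) = (\<integral>y. \<bar>orth_proj U x \<bullet> y\<bar>\<^sup>2 \<partial>m)"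
    using P2_AE_mem[OF P2]
    by (intro integral_cong_AE) (auto simp: measurable_cong_sets[OF P2_sets[OF P2] refl]
        inner_orth_proj[OF U] inner_commute)
  also have "\<dots> \<le> B * (norm (orth_proj U x))\<^sup>2"
    using bessel orth_proj_in[OF U] by (simp add: bessel_def)
  also have "\<dots> \<le> B * (norm x)\<^sup>2"
    using assms norm_orth_proj_le[OF U, of x] by (intro mult_left_mono power_mono) auto
  finally show ?thesis .
qed

lemma
  fixes m :: "(real^'n) measure"
  assumes U: "subspace U" and P2: "P2 Z m"
  shows P2_distr_orth_proj: "P2 U (distr m borel (orth_proj U))"
    and integral_distr_orth_proj_inner_sq: "x \<in> U \<Longrightarrow>
      (\<integral>y. \<bar>x \<bullet> y\<bar>\<^sup>2 \<partial>distr m borel (orth_proj U)) = (\<integral>y. \<bar>x \<bullet> y\<bar>\<^sup>2 \<partial>m)"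
proof -
  have meas: "orth_proj U \<in> measurable m borel"
    using borel_measurable_linear[OF linear_orth_proj[OF U]]
    by (simp add: measurable_cong_sets[OF P2_sets[OF P2] refl])
  interpret prob_space m by (rule P2_prob_space[OF P2])
  have "orth_proj U -` U \<inter> space m = space m" using orth_proj_in[OF U] by auto
  then have "emeasure (distr m borel (orth_proj U)) U = 1"
    using closed_subspace[OF U] by (simp add: emeasure_distr[OF meas] emeasure_space_1)
  then have "prob_on U (distr m borel (orth_proj U))"
    using closed_subspace[OF U] prob_space_distr[OF meas] by (simp add: prob_on_def)
  moreover have "integrable m (\<lambda>y. (norm (orth_proj U y))\<^sup>2)"
  proof (rule Bochner_Integration.integrable_bound)
    show "integrable m (\<lambda>y. (norm y)\<^sup>2)" using P2 by (simp add: P2_def)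
    show "(\<lambda>y. (norm (orth_proj U y))\<^sup>2) \<in> borel_measurable m" using meas by measurable
    show "AE y in m. norm ((norm (orth_proj U y))\<^sup>2) \<le> norm ((norm y)\<^sup>2)"
      using norm_orth_proj_le[OF U] by (auto intro!: power_mono)
  qed
  ultimately show "P2 U (distr m borel (orth_proj U))"
    by (simp add: P2_def integrable_distr_eq[OF meas])
  show "x \<in> U \<Longrightarrow>
      (\<integral>y. \<bar>x \<bullet> y\<bar>\<^sup>2 \<partial>distr m borel (orth_proj U)) = (\<integral>y. \<bar>x \<bullet> y\<bar>\<^sup>2 \<partial>m)"
    by (simp add: integral_distr[OF meas] inner_orth_proj[OF U])
qed

lemma bessel_distr_orth_proj:
  fixes m :: "(real^'n) measure"
  assumes "bessel W m B" "subspace W" "subspace U" "0 \<le> B"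
  shows "bessel U (distr m borel (orth_proj U)) B"
proof -
  have P2: "P2 W m" using assms(1) by (simp add: bessel_def)
  show ?thesis
    unfolding bessel_def
  proof (intro conjI ballI)
    show "P2 U (distr m borel (orth_proj U))" by (rule P2_distr_orth_proj[OF assms(3) P2])
    fix x assume "x \<in> U"
    have "(\<integral>y. \<bar>x \<bullet> y\<bar>\<^sup>2 \<partial>distr m borel (orth_proj U)) = (\<integral>y. \<bar>x \<bullet> y\<bar>\<^sup>2 \<partial>m)"
      by (rule integral_distr_orth_proj_inner_sq[OF assms(3) P2 \<open>x \<in> U\<close>])
    also have "\<dots> \<le> B * (norm x)\<^sup>2" by (rule bessel_bound_all[OF assms(1,2,4)])
    finally show "(\<integral>y. \<bar>x \<bullet> y\<bar>\<^sup>2 \<partial>distr m borel (orth_proj U)) \<le> B * (norm x)\<^sup>2" .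
  qed
qed

lemma ex_prob_frameI:
  assumes bessel: "bessel U m B" and "0 < A"
    and lower: "\<And>x. x \<in> U \<Longrightarrow> A * (norm x)\<^sup>2 \<le> (\<integral>y. \<bar>x \<bullet> y\<bar>\<^sup>2 \<partial>m)"
  shows "\<exists>B'. prob_frame U m A B'"
proof -
  have "(\<integral>y. \<bar>x \<bullet> y\<bar>\<^sup>2 \<partial>m) \<le> max A B * (norm x)\<^sup>2" if "x \<in> U" for x
  proof -
    have "(\<integral>y. \<bar>x \<bullet> y\<bar>\<^sup>2 \<partial>m) \<le> B * (norm x)\<^sup>2" using bessel that by (simp add: bessel_def)
    also have "\<dots> \<le> max A B * (norm x)\<^sup>2" by (simp add: mult_right_mono)
    finally show ?thesis .
  qed
  then have "bessel U m (max A B)" using bessel by (simp add: bessel_def)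
  then have "prob_frame U m A (max A B)" using \<open>0 < A\<close> lower by (simp add: prob_frame_def)
  then show ?thesis by blast
qed

section \<open>The cross-covariance of a coupling\<close>

lemma coupling_distr_map_prod:
  assumes "coupling \<gamma> \<mu> \<nu>" "g \<in> borel_measurable borel" "h \<in> borel_measurable borel"
  shows "coupling (distr \<gamma> (borel \<Otimes>\<^sub>M borel) (\<lambda>p. (g (fst p), h (snd p))))
           (distr \<mu> borel g) (distr \<nu> borel h)"
proof -
  let ?F = "\<lambda>p. (g (fst p), h (snd p))"
  have sets: "sets \<gamma> = sets (borel \<Otimes>\<^sub>M borel)" using assms(1) by (simp add: coupling_def)
  have F: "?F \<in> measurable \<gamma> (borel \<Otimes>\<^sub>M borel)"
    using assms(2,3) by (simp add: measurable_cong_sets[OF sets refl])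
  have fst: "fst \<in> measurable \<gamma> borel" and snd: "snd \<in> measurable \<gamma> borel"
    by (simp_all add: measurable_cong_sets[OF sets refl])
  have "distr (distr \<gamma> (borel \<Otimes>\<^sub>M borel) ?F) borel fst = distr (distr \<gamma> borel fst) borel g"
    using F fst assms(2) by (simp add: distr_distr comp_def)
  moreover have "distr (distr \<gamma> (borel \<Otimes>\<^sub>M borel) ?F) borel snd = distr (distr \<gamma> borel snd) borel h"
    using F snd assms(3) by (simp add: distr_distr comp_def)
  ultimately show ?thesis
    using assms(1) prob_space.prob_space_distr[OF _ F] by (simp add: coupling_def)
qed

definition cross_covariance :: "((real^'n) \<times> (real^'n)) measure \<Rightarrow> real^'n^'n" where
  "cross_covariance \<gamma> = (\<integral>p. outer (fst p) (snd p) \<partial>\<gamma>)"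

lemma outer_mult_vec: "outer x y *v f = (y \<bullet> f) *\<^sub>R x"
  by (simp add: outer_def matrix_vector_mult_def inner_vec_def vec_eq_iff sum_distrib_left
      sum_distrib_right mult_ac)

lemma norm_outer: "norm (outer x y) = norm x * norm y"
proof -
  have row: "outer x y $ i = x $ i *\<^sub>R y" for i by (simp add: outer_def vec_eq_iff)
  have "norm (outer x y) = L2_set (\<lambda>i. norm (x $ i) * norm y) UNIV"
    unfolding norm_vec_def[of "outer x y"] row by simp
  also have "\<dots> = norm x * norm y"
    unfolding norm_vec_def[of x] by (rule L2_set_left_distrib[symmetric]) simp
  finally show ?thesis .
qed

lemma borel_measurable_outer:
  "(\<lambda>p. outer (fst p) (snd p)) \<in> borel_measurable (borel \<Otimes>\<^sub>M borel)"
  unfolding borel_prod outer_def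
  by (intro borel_measurable_continuous_onI continuous_on_vec_lambda continuous_intros)

lemma cross_covariance_mult_vec:
  fixes \<gamma> :: "((real^'n) \<times> (real^'n)) measure"
  assumes "integrable \<gamma> (\<lambda>p. outer (fst p) (snd p))"
  shows "cross_covariance \<gamma> *v f = (\<integral>p. (snd p \<bullet> f) *\<^sub>R fst p \<partial>\<gamma>)"
proof -
  have "linear (\<lambda>M :: real^'n^'n. M *v f)"
    by (rule linearI) (simp_all only: matrix_vector_mult_add_rdistrib scaleR_matrix_vector_assoc)
  then have "bounded_linear (\<lambda>M :: real^'n^'n. M *v f)" by (simp add: linear_conv_bounded_linear)
  from integral_bounded_linear[OF this assms] show ?thesis
    by (simp add: cross_covariance_def outer_mult_vec)
qed

lemma integral_lower_bound_AM_GM: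
  fixes a b :: "'a \<Rightarrow> real"
  assumes "integrable M (\<lambda>p. (a p)\<^sup>2)" "integrable M (\<lambda>p. (b p)\<^sup>2)" "integrable M (\<lambda>p. a p * b p)"
    and bound: "(\<integral>p. (b p)\<^sup>2 \<partial>M) \<le> B * (\<integral>p. a p * b p \<partial>M)" and "0 < B"
  shows "1 / B * (\<integral>p. a p * b p \<partial>M) \<le> (\<integral>p. (a p)\<^sup>2 \<partial>M)"
proof -
  have "2 * (a p * b p) \<le> B * (a p)\<^sup>2 + 1 / B * (b p)\<^sup>2" for p
  proof -
    have "0 \<le> (B * a p - b p)\<^sup>2" by simp
    then have "B * (2 * (a p * b p)) \<le> B * (B * (a p)\<^sup>2 + 1 / B * (b p)\<^sup>2)"
      using \<open>0 < B\<close> by (simp add: power2_eq_square algebra_simps)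
    then show ?thesis using \<open>0 < B\<close> by simp
  qed
  then have "(\<integral>p. 2 * (a p * b p) \<partial>M) \<le> (\<integral>p. B * (a p)\<^sup>2 + 1 / B * (b p)\<^sup>2 \<partial>M)"
    using assms by (intro integral_mono) auto
  then have "2 * (\<integral>p. a p * b p \<partial>M) \<le> B * (\<integral>p. (a p)\<^sup>2 \<partial>M) + 1 / B * (\<integral>p. (b p)\<^sup>2 \<partial>M)"
    using assms by simp
  also have "1 / B * (\<integral>p. (b p)\<^sup>2 \<partial>M) \<le> (\<integral>p. a p * b p \<partial>M)"
    using bound \<open>0 < B\<close> by (simp add: field_simps)
  finally show ?thesis using \<open>0 < B\<close> by (simp add: field_simps)
qed

lemma product_le_sum_squares: "(a::real) * b \<le> a\<^sup>2 + b\<^sup>2" if "0 \<le> a" "0 \<le> b"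
proof -
  have "0 \<le> (a - b)\<^sup>2" by simp
  then show ?thesis using mult_nonneg_nonneg[OF that] by (simp add: power2_diff)
qed

locale second_moment_coupling =
  fixes W V :: "(real^'n) set"
    and \<mu> \<nu> :: "(real^'n) measure"
    and \<gamma> :: "((real^'n) \<times> (real^'n)) measure"
  assumes P2_fst: "P2 W \<mu>" and P2_snd: "P2 V \<nu>" and coupling: "coupling \<gamma> \<mu> \<nu>"
begin

lemma measurable_coupling: "measurable \<gamma> N = measurable (borel \<Otimes>\<^sub>M borel) N"
  using coupling by (intro measurable_cong_sets) (simp_all add: coupling_def)

lemma
  shows distr_fst: "distr \<gamma> borel fst = \<mu>"
    and distr_snd: "distr \<gamma> borel snd = \<nu>"
  using coupling by (simp_all add: coupling_def)

lemma
  shows measurable_fst: "fst \<in> measurable \<gamma> borel"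
    and measurable_snd: "snd \<in> measurable \<gamma> borel"
  by (simp_all add: measurable_coupling)

lemma AE_snd_mem: "AE p in \<gamma>. snd p \<in> V"
  using AE_distrD[OF measurable_snd P2_AE_mem[OF P2_snd[folded distr_snd]]] .

lemma integrable_second_moment:
  "integrable \<gamma> (\<lambda>p. (norm (fst p))\<^sup>2 + (norm (snd p))\<^sup>2)"
proof -
  have "integrable (distr \<gamma> borel fst) (\<lambda>x. (norm x)\<^sup>2)"
    and "integrable (distr \<gamma> borel snd) (\<lambda>y. (norm y)\<^sup>2)"
    using P2_fst P2_snd by (simp_all add: P2_def distr_fst distr_snd)
  then show ?thesis
    by (simp add: integrable_distr_eq[OF measurable_fst] integrable_distr_eq[OF measurable_snd])
qed

lemma integrable_quadratic_bound:
  fixes h :: "_ \<Rightarrow> 'b::{banach, second_countable_topology}"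
  assumes "h \<in> borel_measurable (borel \<Otimes>\<^sub>M borel)"
    and "\<And>p. norm (h p) \<le> c * ((norm (fst p))\<^sup>2 + (norm (snd p))\<^sup>2)"
  shows "integrable \<gamma> h"
proof (rule Bochner_Integration.integrable_bound)
  show "integrable \<gamma> (\<lambda>p. c * ((norm (fst p))\<^sup>2 + (norm (snd p))\<^sup>2))"
    using integrable_second_moment by simp
  show "h \<in> borel_measurable \<gamma>" using assms(1) by (simp add: measurable_coupling)
  show "AE p in \<gamma>. norm (h p) \<le> norm (c * ((norm (fst p))\<^sup>2 + (norm (snd p))\<^sup>2))"
    by (intro AE_I2) (simp only: real_norm_def, rule order_trans[OF assms(2) abs_ge_self])
qed

lemma integrable_outer: "integrable \<gamma> (\<lambda>p. outer (fst p) (snd p))"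
  using product_le_sum_squares
  by (intro integrable_quadratic_bound[where c = 1] borel_measurable_outer) (simp add: norm_outer)

lemma
  shows integrable_scaleR_fst: "integrable \<gamma> (\<lambda>p. (snd p \<bullet> f) *\<^sub>R fst p)"
    and integrable_scaleR_snd: "integrable \<gamma> (\<lambda>p. (fst p \<bullet> f) *\<^sub>R snd p)"
proof -
  have "norm ((y \<bullet> f) *\<^sub>R x) \<le> norm f * ((norm x)\<^sup>2 + (norm y)\<^sup>2)" for x y :: "real^'n"
  proof -
    have "norm ((y \<bullet> f) *\<^sub>R x) \<le> norm y * norm f * norm x"
      by (simp add: Cauchy_Schwarz_ineq2 mult_right_mono)
    also have "\<dots> \<le> norm f * ((norm x)\<^sup>2 + (norm y)\<^sup>2)"
      using product_le_sum_squares[of "norm x" "norm y"] by (simp add: mult_left_mono mult_ac)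
    finally show ?thesis .
  qed
  note bound = this
  show "integrable \<gamma> (\<lambda>p. (snd p \<bullet> f) *\<^sub>R fst p)"
    by (rule integrable_quadratic_bound[where c = "norm f"]) (measurable, rule bound)
  show "integrable \<gamma> (\<lambda>p. (fst p \<bullet> f) *\<^sub>R snd p)"
    by (rule integrable_quadratic_bound[where c = "norm f"]) (measurable, metis bound add.commute)
qed

lemma integrable_inner_mult: "integrable \<gamma> (\<lambda>p. (fst p \<bullet> f) * (snd p \<bullet> g))"
  using integrable_inner_left[OF integrable_scaleR_snd[of f], of g] by simp

lemma
  shows integrable_inner_fst_sq: "integrable \<gamma> (\<lambda>p. (fst p \<bullet> x)\<^sup>2)"
    and integrable_inner_snd_sq: "integrable \<gamma> (\<lambda>p. (snd p \<bullet> x)\<^sup>2)"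
proof -
  have "norm ((y \<bullet> x)\<^sup>2) \<le> (norm x)\<^sup>2 * ((norm y)\<^sup>2 + (norm z)\<^sup>2)" for y z :: "real^'n"
  proof -
    have "\<bar>y \<bullet> x\<bar>\<^sup>2 \<le> (norm x * norm y)\<^sup>2"
      using Cauchy_Schwarz_ineq2[of y x] by (intro power_mono) (auto simp: mult.commute)
    also have "\<dots> \<le> (norm x)\<^sup>2 * ((norm y)\<^sup>2 + (norm z)\<^sup>2)"
      by (simp add: power_mult_distrib distrib_left)
    finally show ?thesis by simp
  qed
  note bound = this
  show "integrable \<gamma> (\<lambda>p. (fst p \<bullet> x)\<^sup>2)"
    by (rule integrable_quadratic_bound[where c = "(norm x)\<^sup>2"]) (measurable, rule bound)
  show "integrable \<gamma> (\<lambda>p. (snd p \<bullet> x)\<^sup>2)"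
    by (rule integrable_quadratic_bound[where c = "(norm x)\<^sup>2"]) (measurable, metis bound add.commute)
qed

lemma inner_cross_covariance:
  "g \<bullet> (cross_covariance \<gamma> *v f) = (\<integral>p. (fst p \<bullet> g) * (snd p \<bullet> f) \<partial>\<gamma>)"
  using integral_inner_right[OF integrable_scaleR_fst[of f], of g]
  by (simp add: cross_covariance_mult_vec[OF integrable_outer] inner_commute mult.commute)

lemma inner_integral_scaleR_snd:
  "(\<integral>p. (fst p \<bullet> f) *\<^sub>R snd p \<partial>\<gamma>) \<bullet> g = (\<integral>p. (fst p \<bullet> f) * (snd p \<bullet> g) \<partial>\<gamma>)"
  using integral_inner_left[OF integrable_scaleR_snd[of f], of g] by simp

lemma cross_covariance_annihilates:
  assumes "u \<in> orthogonal_comp V"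
  shows "cross_covariance \<gamma> *v u = 0"
proof -
  have "AE p in \<gamma>. (snd p \<bullet> u) *\<^sub>R fst p = 0"
    using AE_snd_mem
    by eventually_elim (use assms in \<open>simp add: orthogonal_comp_def orthogonal_def\<close>)
  then show ?thesis
    by (simp add: cross_covariance_mult_vec[OF integrable_outer] measurable_coupling
        integral_cong_AE[where g = "\<lambda>_. 0"])
qed

lemma cross_covariance_eq_matrix_iff:
  assumes "linear F"
  shows "(\<forall>f. F f = (\<integral>p. (snd p \<bullet> f) *\<^sub>R fst p \<partial>\<gamma>)) \<longleftrightarrow> cross_covariance \<gamma> = matrix F"
  by (simp add: matrix_eq matrix_vector_mul(2)[OF assms] cross_covariance_mult_vec[OF integrable_outer]
      eq_commute)

lemma cross_covariance_eq_matrix_iff_inner: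
  assumes "linear F"
  shows "(\<forall>f g. F f \<bullet> g = (\<integral>p. (fst p \<bullet> g) * (snd p \<bullet> f) \<partial>\<gamma>)) \<longleftrightarrow>
    cross_covariance \<gamma> = matrix F"
  unfolding cross_covariance_eq_matrix_iff[OF assms, symmetric]
    cross_covariance_mult_vec[OF integrable_outer, symmetric] inner_cross_covariance[symmetric]
  by (simp only: inner_commute[of "F _"] vector_eq_ldot)

lemma cross_covariance_eq_matrix_iff_adjoint_inner:
  assumes "linear F"
  shows "(\<forall>f g. adjoint F f \<bullet> g = (\<integral>p. (fst p \<bullet> f) * (snd p \<bullet> g) \<partial>\<gamma>)) \<longleftrightarrow>
    cross_covariance \<gamma> = matrix F"
  unfolding cross_covariance_eq_matrix_iff[OF assms, symmetric]
    cross_covariance_mult_vec[OF integrable_outer, symmetric] inner_cross_covariance[symmetric]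
  by (subst all_comm) (simp only: adjoint_clauses(2)[OF assms] vector_eq_ldot)

lemma cross_covariance_eq_matrix_iff_adjoint:
  assumes "linear F"
  shows "(\<forall>f. adjoint F f = (\<integral>p. (fst p \<bullet> f) *\<^sub>R snd p \<partial>\<gamma>)) \<longleftrightarrow>
    cross_covariance \<gamma> = matrix F"
  unfolding cross_covariance_eq_matrix_iff_adjoint_inner[OF assms, symmetric]
    inner_integral_scaleR_snd[symmetric]
  by (simp add: vector_eq_rdot)

lemma cross_covariance_eq_oblique_proj_iff:
  assumes ds: "direct_sum_univ W (orthogonal_comp V)"
  shows "(\<forall>f\<in>W. f = (\<integral>p. (snd p \<bullet> f) *\<^sub>R fst p \<partial>\<gamma>)) \<longleftrightarrow>
    cross_covariance \<gamma> = matrix (oblique_proj W (orthogonal_comp V))"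
  unfolding cross_covariance_eq_matrix_iff[OF linear_oblique_proj[OF ds], symmetric]
    cross_covariance_mult_vec[OF integrable_outer, symmetric]
proof
  let ?P = "oblique_proj W (orthogonal_comp V)"
  assume reproducing: "\<forall>f\<in>W. f = cross_covariance \<gamma> *v f"
  show "\<forall>f. ?P f = cross_covariance \<gamma> *v f"
  proof
    fix f
    have "cross_covariance \<gamma> *v f =
        cross_covariance \<gamma> *v ?P f + cross_covariance \<gamma> *v (f - ?P f)"
      by (simp add: matrix_vector_mult_diff_distrib)
    also have "\<dots> = ?P f"
      using reproducing oblique_proj_in[OF ds]
        cross_covariance_annihilates[OF oblique_proj_diff_in[OF ds]] by simp
    finally show "?P f = cross_covariance \<gamma> *v f" by simp
  qed
qed (metis oblique_proj_fixes[OF ds])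

lemma integral_inner_sq_fst: "(\<integral>y. \<bar>x \<bullet> y\<bar>\<^sup>2 \<partial>\<mu>) = (\<integral>p. (fst p \<bullet> x)\<^sup>2 \<partial>\<gamma>)"
  by (simp add: distr_fst[symmetric] integral_distr[OF measurable_fst] inner_commute)

lemma integral_inner_sq_snd: "(\<integral>y. \<bar>x \<bullet> y\<bar>\<^sup>2 \<partial>\<nu>) = (\<integral>p. (snd p \<bullet> x)\<^sup>2 \<partial>\<gamma>)"
  by (simp add: distr_snd[symmetric] integral_distr[OF measurable_snd] inner_commute)

lemma frame_lower_bound_fst:
  assumes "bessel V \<nu> B" "subspace V" "0 < B"
    and reproduced: "x \<bullet> (cross_covariance \<gamma> *v x) = (norm x)\<^sup>2"
  shows "1 / B * (norm x)\<^sup>2 \<le> (\<integral>y. \<bar>x \<bullet> y\<bar>\<^sup>2 \<partial>\<mu>)"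
proof -
  have norm_x: "(norm x)\<^sup>2 = (\<integral>p. (fst p \<bullet> x) * (snd p \<bullet> x) \<partial>\<gamma>)"
    using reproduced by (simp add: inner_cross_covariance)
  have "(\<integral>p. (snd p \<bullet> x)\<^sup>2 \<partial>\<gamma>) \<le> B * (norm x)\<^sup>2"
    using bessel_bound_all[OF assms(1,2), of x] \<open>0 < B\<close> integral_inner_sq_snd[of x] by simp
  then show ?thesis
    unfolding integral_inner_sq_fst norm_x
    by (intro integral_lower_bound_AM_GM[OF integrable_inner_fst_sq integrable_inner_snd_sq
          integrable_inner_mult _ \<open>0 < B\<close>]) (simp add: norm_x)
qed

lemma frame_lower_bound_snd:
  assumes "bessel W \<mu> B" "subspace W" "0 < B"
    and reproduced: "x \<bullet> (cross_covariance \<gamma> *v x) = (norm x)\<^sup>2"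
  shows "1 / B * (norm x)\<^sup>2 \<le> (\<integral>y. \<bar>x \<bullet> y\<bar>\<^sup>2 \<partial>\<nu>)"
proof -
  have norm_x: "(norm x)\<^sup>2 = (\<integral>p. (snd p \<bullet> x) * (fst p \<bullet> x) \<partial>\<gamma>)"
    using reproduced by (simp add: inner_cross_covariance mult.commute)
  have "integrable \<gamma> (\<lambda>p. (snd p \<bullet> x) * (fst p \<bullet> x))"
    using integrable_inner_mult[of x x] by (simp add: mult.commute)
  moreover have "(\<integral>p. (fst p \<bullet> x)\<^sup>2 \<partial>\<gamma>) \<le> B * (norm x)\<^sup>2"
    using bessel_bound_all[OF assms(1,2), of x] \<open>0 < B\<close> integral_inner_sq_fst[of x] by simp
  ultimately show ?thesis
    unfolding integral_inner_sq_snd norm_x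
    by (intro integral_lower_bound_AM_GM[OF integrable_inner_snd_sq integrable_inner_fst_sq
          _ _ \<open>0 < B\<close>]) (simp_all add: norm_x)
qed

lemma cross_covariance_distr_map:
  fixes g h :: "real^'n \<Rightarrow> real^'n"
  assumes g: "linear g" and h: "linear h"
    and integrable': "integrable (distr \<gamma> (borel \<Otimes>\<^sub>M borel) (\<lambda>p. (g (fst p), h (snd p))))
      (\<lambda>p. outer (fst p) (snd p))"
  shows "cross_covariance (distr \<gamma> (borel \<Otimes>\<^sub>M borel) (\<lambda>p. (g (fst p), h (snd p)))) =
    matrix g ** cross_covariance \<gamma> ** transpose (matrix h)"
  unfolding matrix_eq
proof
  fix f
  let ?\<gamma>' = "distr \<gamma> (borel \<Otimes>\<^sub>M borel) (\<lambda>p. (g (fst p), h (snd p)))"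
  have map: "(\<lambda>p. (g (fst p), h (snd p))) \<in> measurable \<gamma> (borel \<Otimes>\<^sub>M borel)"
    using borel_measurable_linear[OF g] borel_measurable_linear[OF h] by (simp add: measurable_coupling)
  have integrand: "(\<lambda>p :: (real^'n) \<times> (real^'n). (snd p \<bullet> f) *\<^sub>R fst p)
      \<in> borel_measurable (borel \<Otimes>\<^sub>M borel)"
    by measurable
  have "cross_covariance ?\<gamma>' *v f = (\<integral>p. (h (snd p) \<bullet> f) *\<^sub>R g (fst p) \<partial>\<gamma>)"
    by (simp add: cross_covariance_mult_vec[OF integrable'] integral_distr[OF map integrand])
  also have "\<dots> = (\<integral>p. g ((snd p \<bullet> adjoint h f) *\<^sub>R fst p) \<partial>\<gamma>)"
    by (simp add: adjoint_clauses(1)[OF h] linear_scale[OF g])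
  also have "\<dots> = g (cross_covariance \<gamma> *v adjoint h f)"
    using integral_bounded_linear[OF linear_conv_bounded_linear[THEN iffD1, OF g] integrable_scaleR_fst]
    by (simp add: cross_covariance_mult_vec[OF integrable_outer])
  also have "\<dots> = (matrix g ** cross_covariance \<gamma> ** transpose (matrix h)) *v f"
    by (simp add: matrix_vector_mul_assoc[symmetric] matrix_vector_mul(2)[OF g]
        matrix_adjoint[OF h, symmetric] matrix_vector_mul(2)[OF adjoint_linear[OF h]])
  finally show "cross_covariance ?\<gamma>' *v f =
    (matrix g ** cross_covariance \<gamma> ** transpose (matrix h)) *v f" .
qed

end

section \<open>Couplings reproducing the oblique projection\<close>

locale oblique_dual_coupling = second_moment_coupling +
  assumes subspace_fst: "subspace W" and subspace_snd: "subspace V"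
    and direct_sum: "direct_sum_univ W (orthogonal_comp V)"
    and cross_covariance_eq: "cross_covariance \<gamma> = matrix (oblique_proj W (orthogonal_comp V))"
begin

lemma quadratic_form_cross_covariance:
  assumes "x \<in> W \<or> x \<in> V"
  shows "x \<bullet> (cross_covariance \<gamma> *v x) = (norm x)\<^sup>2"
proof -
  have "x \<bullet> (cross_covariance \<gamma> *v x) = x \<bullet> oblique_proj W (orthogonal_comp V) x"
    by (simp add: cross_covariance_eq matrix_vector_mul(2)[OF linear_oblique_proj[OF direct_sum]])
  also have "\<dots> = x \<bullet> x"
    using assms oblique_proj_fixes[OF direct_sum] inner_oblique_proj[OF direct_sum] by auto
  finally show ?thesis by (simp add: power2_norm_eq_inner)
qed

lemma ex_prob_frame_fst:
  assumes "bessel W \<mu> B\<mu>" "bessel V \<nu> B\<nu>" "0 < B\<nu>"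
  shows "\<exists>B. prob_frame W \<mu> (1 / B\<nu>) B"
  using assms subspace_snd frame_lower_bound_fst quadratic_form_cross_covariance
  by (intro ex_prob_frameI) auto

lemma ex_prob_frame_snd:
  assumes "bessel W \<mu> B\<mu>" "bessel V \<nu> B\<nu>" "0 < B\<mu>"
  shows "\<exists>B. prob_frame V \<nu> (1 / B\<mu>) B"
  using assms subspace_fst frame_lower_bound_snd quadratic_form_cross_covariance
  by (intro ex_prob_frameI) auto

lemma ex_prob_frame_distr_fst:
  assumes "bessel W \<mu> B\<mu>" "0 \<le> B\<mu>" "bessel V \<nu> B\<nu>" "0 < B\<nu>"
  shows "\<exists>B. prob_frame V (distr \<mu> borel (orth_proj V)) (1 / B\<nu>) B"
  using bessel_distr_orth_proj[OF assms(1) subspace_fst subspace_snd assms(2)]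
proof (rule ex_prob_frameI)
  show "0 < 1 / B\<nu>" using \<open>0 < B\<nu>\<close> by simp
  fix x assume "x \<in> V"
  have "1 / B\<nu> * (norm x)\<^sup>2 \<le> (\<integral>y. \<bar>x \<bullet> y\<bar>\<^sup>2 \<partial>\<mu>)"
    using \<open>x \<in> V\<close> by (intro frame_lower_bound_fst[OF assms(3) subspace_snd assms(4)]
        quadratic_form_cross_covariance) simp
  then show "1 / B\<nu> * (norm x)\<^sup>2 \<le> (\<integral>y. \<bar>x \<bullet> y\<bar>\<^sup>2 \<partial>distr \<mu> borel (orth_proj V))"
    by (simp only: integral_distr_orth_proj_inner_sq[OF subspace_snd P2_fst \<open>x \<in> V\<close>])
qed

lemma dual_prob_frames_fst:
  assumes "bessel W \<mu> B\<mu>" "bessel V \<nu> B\<nu>" "0 < B\<nu>"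
  shows "dual_prob_frames W \<mu> (distr \<nu> borel (orth_proj W))"
proof -
  let ?\<gamma>' = "distr \<gamma> (borel \<Otimes>\<^sub>M borel) (\<lambda>p. (fst p, orth_proj W (snd p)))"
  have "distr \<mu> borel (\<lambda>x. x) = \<mu>" by (rule distr_id2) (simp add: P2_sets[OF P2_fst])
  then have coupling': "coupling ?\<gamma>' \<mu> (distr \<nu> borel (orth_proj W))"
    using coupling_distr_map_prod[OF coupling measurable_ident_sets[OF refl]
        borel_measurable_linear[OF linear_orth_proj[OF subspace_fst]]] by simp
  interpret pushed: second_moment_coupling W W \<mu> "distr \<nu> borel (orth_proj W)" ?\<gamma>'
    using P2_fst P2_distr_orth_proj[OF subspace_fst P2_snd] coupling' by unfold_locales
  have "cross_covariance ?\<gamma>' = cross_covariance \<gamma> ** matrix (orth_proj W)"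
    using cross_covariance_distr_map[OF linear_ident linear_orth_proj[OF subspace_fst]
        pushed.integrable_outer]
    by (simp add: matrix_id_mat_1[unfolded id_def] transpose_matrix_orth_proj[OF subspace_fst])
  also have "\<dots> = matrix (oblique_proj W (orthogonal_comp V) \<circ> orth_proj W)"
    by (simp add: cross_covariance_eq matrix_compose linear_orth_proj[OF subspace_fst]
        linear_oblique_proj[OF direct_sum])
  also have "oblique_proj W (orthogonal_comp V) \<circ> orth_proj W = orth_proj W"
    by (simp add: fun_eq_iff oblique_proj_fixes[OF direct_sum] orth_proj_in[OF subspace_fst])
  finally have "cross_covariance ?\<gamma>' = matrix (orth_proj W)" .
  with coupling' show ?thesis
    using ex_prob_frame_fst[OF assms] P2_distr_orth_proj[OF subspace_fst P2_snd]
    unfolding dual_prob_frames_def cross_covariance_def P2_def by blast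
qed

lemma dual_prob_frames_snd:
  assumes "bessel W \<mu> B\<mu>" "0 \<le> B\<mu>" "bessel V \<nu> B\<nu>" "0 < B\<nu>"
  shows "dual_prob_frames V (distr \<mu> borel (orth_proj V)) \<nu>"
proof -
  let ?\<gamma>' = "distr \<gamma> (borel \<Otimes>\<^sub>M borel) (\<lambda>p. (orth_proj V (fst p), snd p))"
  have "distr \<nu> borel (\<lambda>x. x) = \<nu>" by (rule distr_id2) (simp add: P2_sets[OF P2_snd])
  then have coupling': "coupling ?\<gamma>' (distr \<mu> borel (orth_proj V)) \<nu>"
    using coupling_distr_map_prod[OF coupling
        borel_measurable_linear[OF linear_orth_proj[OF subspace_snd]] measurable_ident_sets[OF refl]]
    by simp
  interpret pushed: second_moment_coupling V V "distr \<mu> borel (orth_proj V)" \<nu> ?\<gamma>'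
    using P2_distr_orth_proj[OF subspace_snd P2_fst] P2_snd coupling' by unfold_locales
  have "cross_covariance ?\<gamma>' = matrix (orth_proj V) ** cross_covariance \<gamma>"
    using cross_covariance_distr_map[OF linear_orth_proj[OF subspace_snd] linear_ident
        pushed.integrable_outer]
    by (simp add: matrix_id_mat_1[unfolded id_def])
  also have "\<dots> = matrix (orth_proj V \<circ> oblique_proj W (orthogonal_comp V))"
    by (simp add: cross_covariance_eq matrix_compose linear_orth_proj[OF subspace_snd]
        linear_oblique_proj[OF direct_sum])
  also have "orth_proj V \<circ> oblique_proj W (orthogonal_comp V) = orth_proj V"
    by (simp add: fun_eq_iff orth_proj_oblique_proj[OF subspace_snd direct_sum])
  finally have "cross_covariance ?\<gamma>' = matrix (orth_proj V)" .
  with coupling' show ?thesis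
    using ex_prob_frame_distr_fst[OF assms] P2_snd
    unfolding dual_prob_frames_def cross_covariance_def P2_def by blast
qed

end

theorem lemma4p1:
  fixes W V :: "(real^'n) set"
    and \<mu> \<nu> :: "(real^'n) measure"
    and \<gamma> :: "((real^'n) \<times> (real^'n)) measure"
    and B\<mu> B\<nu> :: real
  assumes "subspace W" and "subspace V"
    and "direct_sum_univ W (orthogonal_comp V)"
    and "B\<mu> > 0" and "B\<nu> > 0"
    and "bessel W \<mu> B\<mu>" and "bessel V \<nu> B\<nu>"
    and "coupling \<gamma> \<mu> \<nu>"
  shows
    "let c1 = (\<forall>f\<in>W. f = (\<integral>p. (snd p \<bullet> f) *\<^sub>R fst p \<partial>\<gamma>));
         c2 = (\<forall>f. oblique_proj W (orthogonal_comp V) f = (\<integral>p. (snd p \<bullet> f) *\<^sub>R fst p \<partial>\<gamma>));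
         c3 = (\<forall>f. oblique_proj V (orthogonal_comp W) f = (\<integral>p. (fst p \<bullet> f) *\<^sub>R snd p \<partial>\<gamma>));
         c4 = (\<forall>f g. oblique_proj W (orthogonal_comp V) f \<bullet> g =
                  (\<integral>p. (fst p \<bullet> g) * (snd p \<bullet> f) \<partial>\<gamma>));
         c5 = (\<forall>f g. oblique_proj V (orthogonal_comp W) f \<bullet> g =
                  (\<integral>p. (fst p \<bullet> f) * (snd p \<bullet> g) \<partial>\<gamma>))
     in (c1 \<longleftrightarrow> c2) \<and> (c2 \<longleftrightarrow> c3) \<and> (c3 \<longleftrightarrow> c4) \<and> (c4 \<longleftrightarrow> c5) \<and>
        (c1 \<longrightarrow>
           (\<exists>B. prob_frame W \<mu> (1 / B\<nu>) B) \<and> (\<exists>B. prob_frame V \<nu> (1 / B\<mu>) B) \<and>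
           dual_prob_frames W \<mu> (distr \<nu> borel (orth_proj W)) \<and>
           dual_prob_frames V (distr \<mu> borel (orth_proj V)) \<nu>)"
proof -
  interpret second_moment_coupling W V \<mu> \<nu> \<gamma>
    using assms(6-8) by unfold_locales (simp_all add: bessel_def)
  have lin: "linear (oblique_proj W (orthogonal_comp V))"
    by (rule linear_oblique_proj[OF assms(3)])
  note adj = adjoint_oblique_proj[OF assms(2,3)]
  have frames: "(\<exists>B. prob_frame W \<mu> (1 / B\<nu>) B) \<and> (\<exists>B. prob_frame V \<nu> (1 / B\<mu>) B) \<and>
      dual_prob_frames W \<mu> (distr \<nu> borel (orth_proj W)) \<and>
      dual_prob_frames V (distr \<mu> borel (orth_proj V)) \<nu>"
    if "cross_covariance \<gamma> = matrix (oblique_proj W (orthogonal_comp V))"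
  proof -
    interpret oblique_dual_coupling W V \<mu> \<nu> \<gamma>
      using assms(1-3) that by unfold_locales
    show ?thesis
      using assms(4-7) ex_prob_frame_fst ex_prob_frame_snd dual_prob_frames_fst dual_prob_frames_snd
      by (meson less_imp_le)
  qed
  show ?thesis
    unfolding Let_def cross_covariance_eq_oblique_proj_iff[OF assms(3)]
      cross_covariance_eq_matrix_iff[OF lin] cross_covariance_eq_matrix_iff_inner[OF lin]
      cross_covariance_eq_matrix_iff_adjoint[OF lin, unfolded adj]
      cross_covariance_eq_matrix_iff_adjoint_inner[OF lin, unfolded adj]
    using frames by blast
qed

end
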